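(* Let $\mu\in\mathcal P_c^*(\mathbb R^2)$. Then there exists a constant $c>0$ such that $\operatorname{std}(\widehat{\mathcal R}_\theta[\mu])\ge c$ for all $\theta\in\mathbb S_1$.
   Context: $\mathbb S_1=\{x\in\mathbb R^2:\|x\|=1\}$; $\mathcal R_\theta[\mu]=(\langle\cdot,\theta\rangle)_\#\mu$. Fix a reference Borel probability measure $\rho$ on $\mathbb R$ without atoms. For a probability measure $\nu$ on $\mathbb R$ with $F_\nu(t)=\nu((-\infty,t])$, $F_\nu^{[-1]}(t)=\inf\{s:F_\nu(s)>t\}$ and the CDT is $\hat\nu=F_\nu^{[-1]}\circ F_\rho$; $\widehat{\mathcal R}_\theta[\mu]$ is the CDT of $\mathcal R_\theta[\mu]$. For $g\in L^2_\rho(\mathbb R)$, $\operatorname{mean}(g)=\int g\,\mathrm d\rho$, $\operatorname{std}(g)=(\int|g-\operatorname{mean}(g)|^2\mathrm d\rho)^{1/2}$. $\mathcal P_c^*(\mathbb R^2)$ is the set of compactly supported Borel probability measures on $\mathbb R^2$ whose support has affine hull of dimension $>1$. *)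

theory Defs
  imports "HOL-Probability.Probability"
begin

definition S1 :: "(real^2) set" where
  "S1 = {x. norm x = 1}"

definition radon :: "(real^2) measure \<Rightarrow> real^2 \<Rightarrow> real measure" where
  "radon \<mu> \<theta> = distr \<mu> borel (\<lambda>x. x \<bullet> \<theta>)"

definition cdf_ginv :: "real measure \<Rightarrow> real \<Rightarrow> real" where
  "cdf_ginv \<nu> t = Inf {s. cdf \<nu> s > t}"

definition cdt :: "real measure \<Rightarrow> real measure \<Rightarrow> real \<Rightarrow> real" where
  "cdt \<rho> \<nu> = (\<lambda>x. cdf_ginv \<nu> (cdf \<rho> x))"

definition mean :: "real measure \<Rightarrow> (real \<Rightarrow> real) \<Rightarrow> real" where
  "mean \<rho> g = integral\<^sup>L \<rho> g"

definition std :: "real measure \<Rightarrow> (real \<Rightarrow> real) \<Rightarrow> real" where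
  "std \<rho> g = sqrt (\<integral>x. (g x - mean \<rho> g)\<^sup>2 \<partial>\<rho>)"

definition msupport :: "'a::metric_space measure \<Rightarrow> 'a set" where
  "msupport \<mu> = {x. \<forall>e>0. emeasure \<mu> (ball x e) > 0}"

definition Pc_star :: "(real^2) measure set" where
  "Pc_star = {\<mu>. prob_space \<mu> \<and> sets \<mu> = sets borel \<and>
                 compact (msupport \<mu>) \<and> aff_dim (msupport \<mu>) > 1}"

end

theory Submission
  imports Defs
begin

(* Since rho has no atoms, its distribution function F is continuous and pushes rho forward to
   the uniform distribution on [0,1]; composing with the quantile function of nu therefore pushes
   rho forward to nu (inverse transform sampling).  Hence the CDT of the projection R_theta[mu]
   has, under rho, the law of <x,theta> under mu, and its standard deviation is the square root
   of the variance of <x,theta> under mu, a quadratic form in theta.  If this variance vanished,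
   mu would be concentrated on a line <x,theta> = const, which would then contain the support of
   mu, contradicting that the support has affine dimension 2.  So the variance is positive and
   continuous on the compact circle and has a positive minimum there. *)

lemma (in finite_borel_measure) borel_measurable_cdf [measurable]: "cdf M \<in> borel_measurable borel"
  by (intro borel_measurable_mono) (auto simp: mono_def cdf_nondecreasing)

lemma (in real_distribution) measure_cdf_downset:
  assumes atomless: "\<And>x. measure M {x} = 0"
    and D: "D \<in> sets borel" and down: "\<And>x y. y \<in> D \<Longrightarrow> x \<le> y \<Longrightarrow> x \<in> D"
    and le: "\<And>x. x \<in> D \<Longrightarrow> cdf M x \<le> c" and ge: "\<And>x. x \<notin> D \<Longrightarrow> c \<le> cdf M x"
    and "0 \<le> c" "c \<le> 1"
  shows "measure M D = c"
proof -
  consider "D = {}" | "D = UNIV" | "D \<noteq> {}" "D \<noteq> UNIV" by blast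
  then show ?thesis
  proof cases
    case 1
    have "c \<le> 0"
      by (rule tendsto_lowerbound[OF cdf_lim_at_bot]) (auto simp: 1 ge)
    with \<open>0 \<le> c\<close> 1 show ?thesis by simp
  next
    case 2
    have "1 \<le> c"
      by (rule tendsto_upperbound[OF cdf_lim_at_top_prob]) (auto simp: 2 le)
    with \<open>c \<le> 1\<close> 2 show ?thesis using prob_space by simp
  next
    case 3
    then obtain a where "a \<notin> D" by blast
    then have bdd: "bdd_above D"
      using down by (meson bdd_above_def linear)
    define q where "q = Sup D"
    have below: "x \<in> D" if "x < q" for x
      using less_cSup_iff[OF 3(1) bdd, of x] that down q_def by (meson less_imp_le)
    have above: "x \<notin> D" if "q < x" for x
      using cSup_upper[OF _ bdd, of x] that q_def by force
    have "isCont (cdf M) q"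
      using isCont_cdf atomless by blast
    then have left: "(cdf M \<longlongrightarrow> cdf M q) (at_left q)" and right: "(cdf M \<longlongrightarrow> cdf M q) (at_right q)"
      by (simp_all add: isCont_def filterlim_at_split)
    have "cdf M q \<le> c"
      by (rule tendsto_upperbound[OF left])
        (auto simp: eventually_at_left_field intro!: le below exI[of _ "q - 1"])
    moreover have "c \<le> cdf M q"
      by (rule tendsto_lowerbound[OF right])
        (auto simp: eventually_at_right_field intro!: ge above exI[of _ "q + 1"])
    ultimately have cdf_q: "cdf M q = c" by simp
    have "{..q} = {..<q} \<union> {q}" by auto
    then have "measure M {..<q} = c"
      using finite_measure_Union[of "{..<q}" "{q}"] atomless cdf_q by (simp add: cdf_def)
    moreover have "measure M {..<q} \<le> measure M D"
      using below D by (intro finite_measure_mono) auto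
    moreover have "measure M D \<le> measure M {..q}"
      using above by (intro finite_measure_mono) (auto simp: not_less[symmetric])
    ultimately show ?thesis using cdf_q by (simp add: cdf_def)
  qed
qed

lemma (in real_distribution) measure_cdf_le:
  assumes "\<And>x. measure M {x} = 0" and "0 \<le> c" "c \<le> 1"
  shows "measure M {x. cdf M x \<le> c} = c"
proof (rule measure_cdf_downset[OF assms(1) _ _ _ _ assms(2,3)])
  show "{x. cdf M x \<le> c} \<in> sets borel" by measurable
  show "x \<in> {x. cdf M x \<le> c}" if "y \<in> {x. cdf M x \<le> c}" "x \<le> y" for x y
    using that cdf_nondecreasing[of x y] by simp
qed auto

lemma (in real_distribution) measure_cdf_less:
  assumes "\<And>x. measure M {x} = 0" and "0 \<le> c" "c \<le> 1"
  shows "measure M {x. cdf M x < c} = c"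
proof (rule measure_cdf_downset[OF assms(1) _ _ _ _ assms(2,3)])
  show "{x. cdf M x < c} \<in> sets borel" by measurable
  show "x \<in> {x. cdf M x < c}" if "y \<in> {x. cdf M x < c}" "x \<le> y" for x y
    using that cdf_nondecreasing[of x y] by simp
qed auto

lemma (in real_distribution) AE_cdf_between_0_1:
  assumes "\<And>x. measure M {x} = 0"
  shows "AE x in M. 0 < cdf M x \<and> cdf M x < 1"
proof -
  have "prob {x. cdf M x \<le> 0} = 0"
    using measure_cdf_le[OF assms, of 0] by simp
  then have "prob (space M - {x. cdf M x \<le> 0}) = 1"
    by (subst prob_compl) auto
  then have "AE x in M. 0 < cdf M x"
    by (auto dest: AE_prob_1 simp: not_le)
  moreover have "AE x in M. cdf M x < 1"
    using measure_cdf_less[OF assms, of 1] by (auto dest: AE_prob_1)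
  ultimately show ?thesis by eventually_elim simp
qed

lemma (in real_distribution) cdf_gt_set_nonempty_bdd_below:
  assumes "0 < t" "t < 1"
  shows "{s. t < cdf M s} \<noteq> {}" "bdd_below {s. t < cdf M s}"
proof -
  have "\<forall>\<^sub>F s in at_top. t < cdf M s"
    using cdf_lim_at_top_prob \<open>t < 1\<close> by (rule order_tendstoD)
  then show "{s. t < cdf M s} \<noteq> {}"
    by (auto simp: eventually_at_top_linorder)
  have "\<forall>\<^sub>F s in at_bot. cdf M s < t"
    using cdf_lim_at_bot \<open>0 < t\<close> by (rule order_tendstoD)
  then obtain s0 where "\<And>s. s \<le> s0 \<Longrightarrow> cdf M s < t"
    by (auto simp: eventually_at_bot_linorder)
  then show "bdd_below {s. t < cdf M s}"
    unfolding bdd_below_def by (metis linear mem_Collect_eq not_less_iff_gr_or_eq)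
qed

lemma (in real_distribution) cdf_ginv_le:
  assumes "0 < t" "t < 1" "t < cdf M s"
  shows "cdf_ginv M t \<le> s"
  unfolding cdf_ginv_def using cdf_gt_set_nonempty_bdd_below assms by (intro cInf_lower) auto

lemma (in real_distribution) le_cdf_if_cdf_ginv_le:
  assumes "0 < t" "t < 1" "cdf_ginv M t \<le> s"
  shows "t \<le> cdf M s"
proof (rule tendsto_lowerbound[OF cdf_is_right_cont[unfolded continuous_within]])
  have "t < cdf M s'" if "s < s'" for s'
  proof -
    have "Inf {s. t < cdf M s} < s'"
      using assms that unfolding cdf_ginv_def by simp
    then obtain y where "t < cdf M y" "y < s'"
      using cInf_less_iff[OF cdf_gt_set_nonempty_bdd_below[OF assms(1,2)]] by auto
    then show ?thesis using cdf_nondecreasing[of y s'] by simp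
  qed
  then show "\<forall>\<^sub>F s' in at_right s. t \<le> cdf M s'"
    by (auto simp: eventually_at_right_field intro!: less_imp_le exI[of _ "s + 1"])
qed simp

lemma (in real_distribution) borel_measurable_cdf_ginv [measurable]:
  "cdf_ginv M \<in> borel_measurable borel"
proof (rule borel_measurable_piecewise_mono[of "{{..<0}, {0}, {0<..<1}, {1..}}"])
  have "{s. t < cdf M s} = UNIV" if "t < 0" for t
    using that cdf_nonneg less_le_trans by blast
  then have below_0: "cdf_ginv M t = Inf UNIV" if "t < 0" for t
    using that by (simp add: cdf_ginv_def)
  have "{s. t < cdf M s} = {}" if "1 \<le> t" for t
    using that cdf_bounded_prob order_trans by (simp add: not_less) blast
  then have above_1: "cdf_ginv M t = Inf {}" if "1 \<le> t" for t
    using that by (simp add: cdf_ginv_def)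
  have between: "mono_on {0<..<1} (cdf_ginv M)"
  proof (rule mono_onI)
    fix r s :: real
    assume "r \<in> {0<..<1}" "s \<in> {0<..<1}" "r \<le> s"
    then show "cdf_ginv M r \<le> cdf_ginv M s"
      unfolding cdf_ginv_def
      using cdf_gt_set_nonempty_bdd_below[of r] cdf_gt_set_nonempty_bdd_below[of s]
      by (intro cInf_superset_mono) auto
  qed
  show "mono_on I (cdf_ginv M)" if "I \<in> {{..<0}, {0}, {0<..<1}, {1..}}" for I
    using that by (elim insertE emptyE) (simp_all add: between, simp_all add: mono_on_def below_0 above_1)
qed auto

lemma borel_measurable_cdt:
  assumes "real_distribution \<rho>" "real_distribution \<nu>"
  shows "cdt \<rho> \<nu> \<in> borel_measurable borel"
proof -
  interpret \<rho>: real_distribution \<rho> by fact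
  interpret \<nu>: real_distribution \<nu> by fact
  show ?thesis unfolding cdt_def by measurable
qed

theorem distr_cdt:
  assumes \<rho>: "real_distribution \<rho>" and atomless: "\<And>x. measure \<rho> {x} = 0"
    and \<nu>: "real_distribution \<nu>"
  shows "distr \<rho> borel (cdt \<rho> \<nu>) = \<nu>"
proof -
  interpret \<rho>: real_distribution \<rho> by fact
  interpret \<nu>: real_distribution \<nu> by fact
  have cdt_meas [measurable]: "cdt \<rho> \<nu> \<in> borel_measurable \<rho>"
    using borel_measurable_cdt[OF \<rho> \<nu>] by simp
  have "cdf (distr \<rho> borel (cdt \<rho> \<nu>)) s = cdf \<nu> s" for s
  proof -
    define c where "c = cdf \<nu> s"
    define A where "A = {x. cdt \<rho> \<nu> x \<le> s}"
    have c: "0 \<le> c" "c \<le> 1"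
      unfolding c_def using \<nu>.cdf_nonneg \<nu>.cdf_bounded_prob by auto
    have A: "A \<in> sets \<rho>" unfolding A_def by measurable
    \<comment> \<open>\<open>cdf_ginv\<close> is junk (\<open>Inf UNIV\<close>, \<open>Inf {}\<close>) off \<open>{0<..<1}\<close>, where \<open>cdf \<rho>\<close> takes its values a.e.\<close>
    have "AE x in \<rho>. x \<in> {x. cdf \<rho> x < c} \<longrightarrow> x \<in> A"
      using \<rho>.AE_cdf_between_0_1[OF atomless]
      by eventually_elim (auto simp: A_def c_def cdt_def intro: \<nu>.cdf_ginv_le)
    then have "measure \<rho> {x. cdf \<rho> x < c} \<le> measure \<rho> A"
      by (rule \<rho>.finite_measure_mono_AE[OF _ A])
    then have "c \<le> measure \<rho> A"
      using \<rho>.measure_cdf_less[OF atomless c] by simp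
    moreover have "AE x in \<rho>. x \<in> A \<longrightarrow> x \<in> {x. cdf \<rho> x \<le> c}"
      using \<rho>.AE_cdf_between_0_1[OF atomless]
      by eventually_elim (auto simp: A_def c_def cdt_def intro: \<nu>.le_cdf_if_cdf_ginv_le)
    then have "measure \<rho> A \<le> measure \<rho> {x. cdf \<rho> x \<le> c}"
      by (rule \<rho>.finite_measure_mono_AE) measurable
    then have "measure \<rho> A \<le> c"
      using \<rho>.measure_cdf_le[OF atomless c] by simp
    moreover have "cdf (distr \<rho> borel (cdt \<rho> \<nu>)) s = measure \<rho> A"
      unfolding cdf_def A_def by (subst measure_distr) (auto simp: vimage_def)
    ultimately show ?thesis unfolding c_def by simp
  qed
  then show ?thesis
    by (intro cdf_unique \<nu> \<rho>.real_distribution_distr) auto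
qed

lemma std_cdt:
  assumes \<rho>: "real_distribution \<rho>" and atomless: "\<And>x. measure \<rho> {x} = 0"
    and \<nu>: "real_distribution \<nu>"
  shows "std \<rho> (cdt \<rho> \<nu>) = sqrt (\<integral>y. (y - (\<integral>y. y \<partial>\<nu>))\<^sup>2 \<partial>\<nu>)"
proof -
  have meas: "cdt \<rho> \<nu> \<in> borel_measurable \<rho>"
    using borel_measurable_cdt[OF \<rho> \<nu>] real_distribution.events_eq_borel[OF \<rho>] by simp
  have transfer: "(\<integral>x. f (cdt \<rho> \<nu> x) \<partial>\<rho>) = (\<integral>y. f y \<partial>\<nu>)"
    if "f \<in> borel_measurable borel" for f :: "real \<Rightarrow> real"
    using integral_distr[OF meas that] distr_cdt[OF assms] by simp
  have "mean \<rho> (cdt \<rho> \<nu>) = (\<integral>y. y \<partial>\<nu>)"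
    unfolding mean_def using transfer[of "\<lambda>y. y"] by simp
  then show ?thesis
    unfolding std_def using transfer[of "\<lambda>y. (y - (\<integral>y. y \<partial>\<nu>))\<^sup>2"] by simp
qed

lemma std_cdt_radon:
  assumes "real_distribution \<rho>" "\<And>x. measure \<rho> {x} = 0"
    and "prob_space \<mu>" "sets \<mu> = sets borel"
  shows "std \<rho> (cdt \<rho> (radon \<mu> \<theta>)) = sqrt (\<integral>x. (x \<bullet> \<theta> - (\<integral>y. y \<bullet> \<theta> \<partial>\<mu>))\<^sup>2 \<partial>\<mu>)"
proof -
  have meas: "(\<lambda>x. x \<bullet> \<theta>) \<in> borel_measurable \<mu>"
    using assms(4) by (simp cong: measurable_cong_sets)
  have "real_distribution (radon \<mu> \<theta>)"
    unfolding radon_def using prob_space.real_distribution_distr[OF assms(3) meas] .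
  with assms(1,2) show ?thesis
    by (simp add: std_cdt radon_def integral_distr[OF meas])
qed

lemma AE_in_msupport:
  fixes \<mu> :: "'a::{metric_space, second_countable_topology} measure"
  assumes "sets \<mu> = sets borel"
  shows "AE x in \<mu>. x \<in> msupport \<mu>"
proof -
  define F where "F = {ball x e | x e. 0 < e \<and> emeasure \<mu> (ball x e) = 0}"
  obtain F' where F': "F' \<subseteq> F" "countable F'" "\<Union>F' = \<Union>F"
    using Lindelof[of F] unfolding F_def by auto
  have "(\<Union>B\<in>F'. B) \<in> null_sets \<mu>"
    using F' assms by (intro null_sets_UN') (auto simp: F_def null_sets_def)
  moreover have "{x \<in> space \<mu>. x \<notin> msupport \<mu>} \<subseteq> (\<Union>B\<in>F'. B)"
  proof
    fix y assume "y \<in> {x \<in> space \<mu>. x \<notin> msupport \<mu>}"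
    then obtain e where "0 < e" "emeasure \<mu> (ball y e) = 0"
      unfolding msupport_def by (auto simp: not_gr_zero)
    then have "ball y e \<in> F" unfolding F_def by blast
    with \<open>0 < e\<close> show "y \<in> (\<Union>B\<in>F'. B)" using F'(3) centre_in_ball by blast
  qed
  ultimately show ?thesis by (rule AE_I')
qed

lemma msupport_subset_closed:
  fixes \<mu> :: "'a::metric_space measure"
  assumes "sets \<mu> = sets borel" "closed C" "AE x in \<mu>. x \<in> C"
  shows "msupport \<mu> \<subseteq> C"
proof
  fix y assume y: "y \<in> msupport \<mu>"
  show "y \<in> C"
  proof (rule ccontr)
    assume "y \<notin> C"
    then obtain e where "0 < e" "ball y e \<subseteq> - C"
      using assms(2) open_contains_ball[of "- C"] by (auto simp: open_Compl)
    then have "emeasure \<mu> (ball y e) \<le> emeasure \<mu> {}"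
      using assms(3) by (intro emeasure_mono_AE) (auto elim!: eventually_mono)
    with y \<open>0 < e\<close> show False by (auto simp: msupport_def)
  qed
qed

context
  fixes \<mu> :: "'a::euclidean_space measure" and R :: real
  assumes prob: "prob_space \<mu>" and sets_eq: "sets \<mu> = sets borel"
    and bounded: "AE x in \<mu>. norm x \<le> R"
begin

interpretation prob_space \<mu> by (fact prob)

lemma integrable_continuous_bounded_support:
  fixes f :: "'a \<Rightarrow> real"
  assumes "continuous_on UNIV f"
  shows "integrable \<mu> f"
proof -
  have "compact (f ` cball 0 R)"
    using assms by (intro compact_continuous_image) (auto intro: continuous_on_subset)
  then obtain B where B: "\<forall>x\<in>cball 0 R. norm (f x) \<le> B"
    by (auto dest!: compact_imp_bounded simp: bounded_iff)
  have "AE x in \<mu>. norm (f x) \<le> B"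
    using bounded by eventually_elim (use B in auto)
  moreover have "f \<in> borel_measurable \<mu>"
    using assms sets_eq by (simp add: borel_measurable_continuous_onI cong: measurable_cong_sets)
  ultimately show ?thesis by (rule integrable_const_bound)
qed

lemma expectation_inner_eq:
  "expectation (\<lambda>x. x \<bullet> t) = (\<Sum>b\<in>Basis. (t \<bullet> b) * expectation (\<lambda>x. x \<bullet> b))"
proof -
  have "expectation (\<lambda>x. x \<bullet> t) = expectation (\<lambda>x. \<Sum>b\<in>Basis. (t \<bullet> b) * (x \<bullet> b))"
    by (simp add: euclidean_inner[of _ t] mult.commute)
  also have "\<dots> = (\<Sum>b\<in>Basis. (t \<bullet> b) * expectation (\<lambda>x. x \<bullet> b))"
    by (simp add: integral_sum integrable_continuous_bounded_support continuous_intros)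
  finally show ?thesis .
qed

lemma second_moment_inner_eq:
  "expectation (\<lambda>x. (x \<bullet> t)\<^sup>2) =
     (\<Sum>b\<in>Basis. \<Sum>c\<in>Basis. (t \<bullet> b) * (t \<bullet> c) * expectation (\<lambda>x. (x \<bullet> b) * (x \<bullet> c)))"
proof -
  have "(x \<bullet> t)\<^sup>2 = (\<Sum>b\<in>Basis. \<Sum>c\<in>Basis. (t \<bullet> b) * (t \<bullet> c) * ((x \<bullet> b) * (x \<bullet> c)))" for x
    by (simp add: power2_eq_square euclidean_inner[of x t] sum_product algebra_simps)
  then show ?thesis
    by (simp add: integral_sum integrable_continuous_bounded_support continuous_intros)
qed

lemma continuous_on_variance_inner: "continuous_on UNIV (\<lambda>t. variance (\<lambda>x. x \<bullet> t))"
proof -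
  have "variance (\<lambda>x. x \<bullet> t) =
      (\<Sum>b\<in>Basis. \<Sum>c\<in>Basis. (t \<bullet> b) * (t \<bullet> c) * expectation (\<lambda>x. (x \<bullet> b) * (x \<bullet> c)))
      - (\<Sum>b\<in>Basis. (t \<bullet> b) * expectation (\<lambda>x. x \<bullet> b))\<^sup>2" for t
  proof -
    have "variance (\<lambda>x. x \<bullet> t) = expectation (\<lambda>x. (x \<bullet> t)\<^sup>2) - (expectation (\<lambda>x. x \<bullet> t))\<^sup>2"
      by (intro variance_eq integrable_continuous_bounded_support continuous_intros)
    then show ?thesis
      by (simp only: second_moment_inner_eq expectation_inner_eq[of t])
  qed
  then show ?thesis
    by (simp only:) (intro continuous_intros)
qed

lemma msupport_subset_hyperplane:
  assumes "variance (\<lambda>x. x \<bullet> t) = 0"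
  shows "msupport \<mu> \<subseteq> {x. t \<bullet> x = expectation (\<lambda>x. x \<bullet> t)}"
proof (rule msupport_subset_closed[OF sets_eq])
  show "closed {x. t \<bullet> x = expectation (\<lambda>x. x \<bullet> t)}"
    by (simp add: closed_hyperplane)
  have "AE x in \<mu>. (x \<bullet> t - expectation (\<lambda>x. x \<bullet> t))\<^sup>2 = 0"
    using assms
    by (subst integral_nonneg_eq_0_iff_AE[symmetric])
      (auto intro!: integrable_continuous_bounded_support continuous_intros)
  then show "AE x in \<mu>. x \<in> {x. t \<bullet> x = expectation (\<lambda>x. x \<bullet> t)}"
    by eventually_elim (simp add: inner_commute)
qed

lemma variance_inner_uniformly_positive:
  assumes "aff_dim (msupport \<mu>) > DIM('a) - 1"
  shows "\<exists>c>0. \<forall>t\<in>sphere 0 1. c \<le> variance (\<lambda>x. x \<bullet> t)"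
proof -
  have pos: "0 < variance (\<lambda>x. x \<bullet> t)" if "t \<in> sphere 0 1" for t
  proof -
    have "variance (\<lambda>x. x \<bullet> t) \<noteq> 0"
    proof
      assume "variance (\<lambda>x. x \<bullet> t) = 0"
      then have "aff_dim (msupport \<mu>) \<le> aff_dim {x. t \<bullet> x = expectation (\<lambda>x. x \<bullet> t)}"
        by (intro aff_dim_subset msupport_subset_hyperplane)
      moreover have "t \<noteq> 0" using that by auto
      ultimately show False using assms by simp
    qed
    with variance_positive[of "\<lambda>x. x \<bullet> t"] show ?thesis by linarith
  qed
  have "sphere (0::'a) 1 \<noteq> {}" by simp
  then obtain t0 where "t0 \<in> sphere 0 1"
    and "\<And>t. t \<in> sphere 0 1 \<Longrightarrow> variance (\<lambda>x. x \<bullet> t0) \<le> variance (\<lambda>x. x \<bullet> t)"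
    using continuous_attains_inf[OF compact_sphere _ continuous_on_subset[OF continuous_on_variance_inner]]
    by blast
  then show ?thesis using pos by blast
qed

end

theorem proposition4:
  fixes \<rho> :: "real measure" and \<mu> :: "(real^2) measure"
  assumes "prob_space \<rho>" and "sets \<rho> = sets borel"
    and "\<And>x. measure \<rho> {x} = 0"
    and "\<mu> \<in> Pc_star"
  shows "\<exists>c>0. \<forall>\<theta>\<in>S1. std \<rho> (cdt \<rho> (radon \<mu> \<theta>)) \<ge> c"
proof -
  have \<rho>: "real_distribution \<rho>"
    using assms(1,2) by (simp add: real_distribution_def real_distribution_axioms_def)
  from \<open>\<mu> \<in> Pc_star\<close> have \<mu>: "prob_space \<mu>" "sets \<mu> = sets borel"
    and "compact (msupport \<mu>)" and dim: "aff_dim (msupport \<mu>) > 1"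
    by (auto simp: Pc_star_def)
  then obtain R where "\<forall>x\<in>msupport \<mu>. norm x \<le> R"
    by (auto dest!: compact_imp_bounded simp: bounded_iff)
  then have "AE x in \<mu>. norm x \<le> R"
    using AE_in_msupport[OF \<mu>(2)] by (auto elim: eventually_mono)
  then obtain c where "c > 0"
    and c: "\<forall>\<theta>\<in>sphere 0 1. c \<le> (\<integral>x. (x \<bullet> \<theta> - (\<integral>y. y \<bullet> \<theta> \<partial>\<mu>))\<^sup>2 \<partial>\<mu>)"
    using variance_inner_uniformly_positive[OF \<mu>] dim by fastforce
  show ?thesis
  proof (intro exI conjI ballI)
    show "sqrt c > 0" using \<open>c > 0\<close> by simp
    fix \<theta> assume "\<theta> \<in> S1"
    then show "sqrt c \<le> std \<rho> (cdt \<rho> (radon \<mu> \<theta>))"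
      using c std_cdt_radon[OF \<rho> assms(3) \<mu>] by (simp add: S1_def)
  qed
qed

end
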